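(* Let $\mathfrak g$ be a nilpotent Lie algebra of step $s$, $\overline X\in\mathfrak g/[\mathfrak g,\mathfrak g]$, and $x\in\mathfrak g$ a representative of $\overline X$. Define $\mathfrak g^{(0)}=\mathfrak g^{(1)}=\mathfrak g$ and $\mathfrak g^{(i+1)}=[\mathfrak g,\mathfrak g^{(i)}]+[x,\mathfrak g^{(i-1)}]$ for $i\ge1$. Then $\mathfrak g^{(2)}=[\mathfrak g,\mathfrak g]$, and for $k\ge3$, $\mathfrak g^{(k)}$ is the linear span of the iterated brackets $[x_1,[x_2,\dots[x_{j-1},x_j]\dots]]$ with either $j\ge k$, or $j<k$ and at least $k-j$ of the $x_i$ congruent to $x$ modulo $[\mathfrak g,\mathfrak g]$. In particular the sequence $(\mathfrak g^{(i)})$ depends only on $\overline X$ and not on $x$, and $[\mathfrak g^{(i)},\mathfrak g^{(j)}]\subseteq\mathfrak g^{(i+j)}$ for all $i,j\ge1$. Moreover $\mathfrak g^{[i]}\subseteq\mathfrak g^{(i)}\subseteq\mathfrak g^{[\lfloor i/2\rfloor+1]}$ for all $i\ge1$, and $\mathfrak g^{(2s)}=0$.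
   Context: $\mathfrak g^{[1]}=\mathfrak g$, $\mathfrak g^{[i+1]}=[\mathfrak g,\mathfrak g^{[i]}]$ is the descending central series; step $s$ means $\mathfrak g^{[s+1]}=0$. *)

theory Defs
  imports Complex_Main
begin

definition lie_algebra :: "('k::field \<Rightarrow> 'a::ab_group_add \<Rightarrow> 'a) \<Rightarrow> ('a \<Rightarrow> 'a \<Rightarrow> 'a) \<Rightarrow> bool" where
  "lie_algebra sc br \<longleftrightarrow> vector_space sc
     \<and> (\<forall>a b c. br (a + b) c = br a c + br b c)
     \<and> (\<forall>a b c. br a (b + c) = br a b + br a c)
     \<and> (\<forall>r a b. br (sc r a) b = sc r (br a b))
     \<and> (\<forall>r a b. br a (sc r b) = sc r (br a b))
     \<and> (\<forall>a. br a a = 0)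
     \<and> (\<forall>a b c. br a (br b c) + br b (br c a) + br c (br a b) = 0)"

definition lie_br_set :: "('k::field \<Rightarrow> 'a::ab_group_add \<Rightarrow> 'a) \<Rightarrow> ('a \<Rightarrow> 'a \<Rightarrow> 'a) \<Rightarrow> 'a set \<Rightarrow> 'a set \<Rightarrow> 'a set" where
  "lie_br_set sc br A B = module.span sc {br a b | a b. a \<in> A \<and> b \<in> B}"

text \<open>Descending central series, indexed from 1: lcs 1 = g, lcs (i+1) = [g, lcs i].
  (lcs 0 = g as a harmless convention.)\<close>
fun lcs :: "('k::field \<Rightarrow> 'a::ab_group_add \<Rightarrow> 'a) \<Rightarrow> ('a \<Rightarrow> 'a \<Rightarrow> 'a) \<Rightarrow> nat \<Rightarrow> 'a set" where
  "lcs sc br 0 = UNIV"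
| "lcs sc br (Suc 0) = UNIV"
| "lcs sc br (Suc (Suc i)) = lie_br_set sc br UNIV (lcs sc br (Suc i))"

definition nilpotent_step :: "('k::field \<Rightarrow> 'a::ab_group_add \<Rightarrow> 'a) \<Rightarrow> ('a \<Rightarrow> 'a \<Rightarrow> 'a) \<Rightarrow> nat \<Rightarrow> bool" where
  "nilpotent_step sc br s \<longleftrightarrow> lcs sc br (s + 1) = {0}"

definition set_sum :: "'a::ab_group_add set \<Rightarrow> 'a set \<Rightarrow> 'a set" where
  "set_sum A B = {a + b | a b. a \<in> A \<and> b \<in> B}"

fun gfil :: "('k::field \<Rightarrow> 'a::ab_group_add \<Rightarrow> 'a) \<Rightarrow> ('a \<Rightarrow> 'a \<Rightarrow> 'a) \<Rightarrow> 'a \<Rightarrow> nat \<Rightarrow> 'a set" where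
  "gfil sc br x 0 = UNIV"
| "gfil sc br x (Suc 0) = UNIV"
| "gfil sc br x (Suc (Suc i)) =
     set_sum (lie_br_set sc br UNIV (gfil sc br x (Suc i))) (lie_br_set sc br {x} (gfil sc br x i))"

fun iter_br :: "('a \<Rightarrow> 'a \<Rightarrow> 'a) \<Rightarrow> 'a list \<Rightarrow> 'a" where
  "iter_br br [] = undefined"
| "iter_br br [y] = y"
| "iter_br br (y # z # zs) = br y (iter_br br (z # zs))"

end

theory Submission
  imports Defs
begin

text \<open>
  First [g^(i), g^(j)] \<subseteq> g^(i+j), by induction on i: g^(i) is spanned by brackets
  [u, v] with v \<in> g^(i-1) and [x, v] with v \<in> g^(i-2), and the Jacobi identity moves
  the outer bracket inside. As g^(2) = [g, g], an element y \<equiv> x is x plus an element of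
  g^(2), so bracketing with y raises the degree by 2. Hence an iterated bracket of length j
  with c entries congruent to x lies in g^(j+c); conversely, unfolding the recursion writes
  every element of g^(k) as a combination of such brackets. This description involves only
  the class of x. Finally g^(i) \<subseteq> [g, g^(i-1)] + [g, g^(i-2)] gives
  g^(i) \<subseteq> g^[\<lfloor>i/2\<rfloor>+1] by induction, hence g^(2s) = 0.
\<close>

lemma set_sum_mono: "A \<subseteq> A' \<Longrightarrow> B \<subseteq> B' \<Longrightarrow> set_sum A B \<subseteq> set_sum A' B'"
  unfolding set_sum_def by blast

context module
begin

lemma subspace_set_sum:
  assumes A: "subspace A" and B: "subspace B"
  shows "subspace (set_sum A B)"
  unfolding subspace_def
proof (intro conjI ballI allI)
  show "0 \<in> set_sum A B"
    unfolding set_sum_def using subspace_0[OF A] subspace_0[OF B] by force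
next
  fix u v assume "u \<in> set_sum A B" "v \<in> set_sum A B"
  then obtain a b a' b' where "u = a + b" "v = a' + b'" "a \<in> A" "a' \<in> A" "b \<in> B" "b' \<in> B"
    unfolding set_sum_def by blast
  moreover have "a + b + (a' + b') = (a + a') + (b + b')"
    by (simp add: ac_simps)
  ultimately show "u + v \<in> set_sum A B"
    unfolding set_sum_def using subspace_add A B by blast
next
  fix c u assume "u \<in> set_sum A B"
  then obtain a b where "u = a + b" "a \<in> A" "b \<in> B"
    unfolding set_sum_def by blast
  moreover have "c *s u = c *s a + c *s b"
    using \<open>u = a + b\<close> by (simp add: scale_right_distrib)
  ultimately show "c *s u \<in> set_sum A B"
    unfolding set_sum_def using subspace_scale A B by blast
qed

lemma set_sum_subset_subspace:
  "subspace C \<Longrightarrow> A \<subseteq> C \<Longrightarrow> B \<subseteq> C \<Longrightarrow> set_sum A B \<subseteq> C"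
  unfolding set_sum_def using subspace_add by blast

lemma set_sum_memI1: "subspace B \<Longrightarrow> a \<in> A \<Longrightarrow> a \<in> set_sum A B"
  unfolding set_sum_def using subspace_0 by force

lemma set_sum_memI2: "subspace A \<Longrightarrow> b \<in> B \<Longrightarrow> b \<in> set_sum A B"
  unfolding set_sum_def using subspace_0 by force

end

locale lie_alg =
  fixes sc :: "'k::field \<Rightarrow> 'a::ab_group_add \<Rightarrow> 'a" and br :: "'a \<Rightarrow> 'a \<Rightarrow> 'a"
  assumes lie: "lie_algebra sc br"
begin

sublocale vector_space sc
  using lie by (simp add: lie_algebra_def)

abbreviation brs where "brs \<equiv> lie_br_set sc br"
abbreviation L where "L \<equiv> lcs sc br"
abbreviation G where "G \<equiv> gfil sc br"

lemma linear_br_right: "module_hom sc sc (br a)"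
  using lie module_axioms by (simp add: lie_algebra_def module_hom_iff)

lemma linear_br_left: "module_hom sc sc (\<lambda>b. br b c)"
  using lie module_axioms by (simp add: lie_algebra_def module_hom_iff)

lemmas br_minus_right = module_hom.neg[OF linear_br_right]
  and br_add_right = module_hom.add[OF linear_br_right]
  and br_add_left = module_hom.add[OF linear_br_left]
  and br_diff_left = module_hom.diff[OF linear_br_left]
  and br_diff_right = module_hom.diff[OF linear_br_right]

lemma br_self[simp]: "br a a = 0"
  using lie by (simp add: lie_algebra_def)

lemma br_antisym: "br a b = - br b a"
proof -
  have "br (a + b) (a + b) = br a a + br b a + (br a b + br b b)"
    by (simp only: br_add_left br_add_right)
  then show ?thesis
    by (simp add: eq_neg_iff_add_eq_0 add.commute)
qed

lemma br_br_left: "br (br u v) t = br u (br v t) - br v (br u t)"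
proof -
  have "br u (br v t) + br v (br t u) + br t (br u v) = 0"
    using lie by (simp add: lie_algebra_def)
  then show ?thesis
    by (simp add: br_antisym[of t u] br_antisym[of t "br u v"] br_minus_right algebra_simps)
qed

lemma br_span_right:
  assumes "b \<in> span B" "subspace C" "\<And>b'. b' \<in> B \<Longrightarrow> br a b' \<in> C"
  shows "br a b \<in> C"
proof -
  have "span B \<subseteq> br a -` C"
    using assms by (intro span_minimal module_hom.subspace_vimage[OF linear_br_right]) auto
  then show ?thesis using assms(1) by blast
qed

lemma br_span_left:
  assumes "a \<in> span A" "subspace C" "\<And>a'. a' \<in> A \<Longrightarrow> br a' b \<in> C"
  shows "br a b \<in> C"
proof -
  have "span A \<subseteq> (\<lambda>a. br a b) -` C"
    using assms by (intro span_minimal module_hom.subspace_vimage[OF linear_br_left]) auto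
  then show ?thesis using assms(1) by blast
qed

lemma subspace_brs[simp]: "subspace (brs A B)"
  by (simp add: lie_br_set_def)

lemma br_mem_brs: "a \<in> A \<Longrightarrow> b \<in> B \<Longrightarrow> br a b \<in> brs A B"
  unfolding lie_br_set_def by (rule span_base) blast

lemma brs_subset:
  "subspace C \<Longrightarrow> (\<And>a b. a \<in> A \<Longrightarrow> b \<in> B \<Longrightarrow> br a b \<in> C) \<Longrightarrow> brs A B \<subseteq> C"
  unfolding lie_br_set_def by (rule span_minimal) auto

lemma brs_mono: "A \<subseteq> A' \<Longrightarrow> B \<subseteq> B' \<Longrightarrow> brs A B \<subseteq> brs A' B'"
  by (rule brs_subset) (auto intro: br_mem_brs)

lemma br_brs_left:
  assumes "a \<in> brs A B" "subspace C" "\<And>u v. u \<in> A \<Longrightarrow> v \<in> B \<Longrightarrow> br (br u v) c \<in> C"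
  shows "br a c \<in> C"
  using assms(1) unfolding lie_br_set_def
  by (rule br_span_left[OF _ assms(2)]) (use assms(3) in blast)

subsection \<open>The two filtrations\<close>

lemma subspace_lcs: "subspace (L n)"
  by (induction n rule: induct_nat_012) auto

lemma subspace_gfil: "subspace (G x n)"
  by (induction n rule: induct_nat_012) (auto intro: subspace_set_sum)

lemma lcs_Suc_subset: "L (Suc n) \<subseteq> L n"
proof (induction n rule: induct_nat_012)
  case (ge2 n)
  then show ?case by (simp add: brs_mono)
qed auto

lemma lcs_antimono: "m \<le> n \<Longrightarrow> L n \<subseteq> L m"
  by (induction n rule: dec_induct) (use lcs_Suc_subset in blast)+

lemma gfil_Suc_subset: "G x (Suc n) \<subseteq> G x n"
proof (induction n rule: induct_nat_012)
  case (ge2 n)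
  then show ?case by (simp add: set_sum_mono brs_mono)
qed auto

lemma gfil_antimono: "m \<le> n \<Longrightarrow> G x n \<subseteq> G x m"
  by (induction n rule: dec_induct) (use gfil_Suc_subset in blast)+

lemma br_mem_gfil_Suc: "b \<in> G x m \<Longrightarrow> br a b \<in> G x (Suc m)"
  by (cases m) (auto intro!: set_sum_memI1 br_mem_brs)

lemma br_mem_gfil_Suc_Suc: "b \<in> G x m \<Longrightarrow> br x b \<in> G x (Suc (Suc m))"
  by (auto intro!: set_sum_memI2 br_mem_brs)

lemma gfil_2: "G x 2 = L 2"
proof -
  have "brs {x} UNIV \<subseteq> brs UNIV UNIV"
    by (rule brs_mono) auto
  then have "set_sum (brs UNIV UNIV) (brs {x} UNIV) = brs UNIV UNIV"
    by (intro antisym set_sum_subset_subspace subset_refl subsetI set_sum_memI1) auto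
  then show ?thesis
    by (simp add: numeral_2_eq_2)
qed

lemma br_gfil: "a \<in> G x i \<Longrightarrow> b \<in> G x j \<Longrightarrow> br a b \<in> G x (i + j)"
proof (induction i arbitrary: a b j rule: induct_nat_012)
  case 0
  show ?case
    using br_mem_gfil_Suc[OF "0.prems"(2)] gfil_Suc_subset by auto
next
  case 1
  then show ?case using br_mem_gfil_Suc by simp
next
  case (ge2 p)
  obtain a1 a2 where a: "a = a1 + a2"
    and a1: "a1 \<in> brs UNIV (G x (Suc p))" and a2: "a2 \<in> brs {x} (G x p)"
    using ge2.prems(1) by (auto simp: set_sum_def)
  have "br a1 b \<in> G x (Suc (Suc p) + j)"
    using a1 subspace_gfil
  proof (rule br_brs_left)
    fix u v assume "v \<in> G x (Suc p)"
    then have "br u (br v b) \<in> G x (Suc (Suc p) + j)"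
      and "br v (br u b) \<in> G x (Suc (Suc p) + j)"
      using ge2.IH(2) ge2.prems(2) br_mem_gfil_Suc by (metis add_Suc add_Suc_right)+
    then show "br (br u v) b \<in> G x (Suc (Suc p) + j)"
      unfolding br_br_left by (rule subspace_diff[OF subspace_gfil])
  qed
  moreover have "br a2 b \<in> G x (Suc (Suc p) + j)"
    using a2 subspace_gfil
  proof (rule br_brs_left)
    fix u v assume "u \<in> {x}" "v \<in> G x p"
    then have "br u (br v b) \<in> G x (Suc (Suc p) + j)"
      and "br v (br u b) \<in> G x (Suc (Suc p) + j)"
      using ge2.IH(1) ge2.prems(2) br_mem_gfil_Suc_Suc by (metis add_Suc add_Suc_right singletonD)+
    then show "br (br u v) b \<in> G x (Suc (Suc p) + j)"
      unfolding br_br_left by (rule subspace_diff[OF subspace_gfil])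
  qed
  ultimately show ?case
    unfolding a br_add_left by (rule subspace_add[OF subspace_gfil])
qed

lemma lcs_subset_gfil: "L n \<subseteq> G x n"
proof (induction n rule: induct_nat_012)
  case (ge2 n)
  then show ?case
    by (auto intro: set_sum_memI1 dest: brs_mono[OF subset_refl, THEN subsetD])
qed auto

lemma gfil_subset_lcs: "G x n \<subseteq> L (n div 2 + 1)"
proof (induction n rule: induct_nat_012)
  case (ge2 n)
  have "brs UNIV (G x (Suc n)) \<subseteq> L (Suc (Suc (Suc n div 2)))"
    using ge2.IH(2) by (simp add: brs_mono)
  also have "\<dots> \<subseteq> L (Suc (Suc (n div 2)))"
    by (rule lcs_antimono) simp
  finally have "brs UNIV (G x (Suc n)) \<subseteq> L (Suc (Suc (n div 2)))" .
  moreover have "brs {x} (G x n) \<subseteq> L (Suc (Suc (n div 2)))"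
    using ge2.IH(1) by (simp add: brs_mono)
  ultimately have "set_sum (brs UNIV (G x (Suc n))) (brs {x} (G x n)) \<subseteq> L (Suc (Suc (n div 2)))"
    by (rule set_sum_subset_subspace[OF subspace_lcs])
  then show ?case
    by simp
qed auto

lemma gfil_eq_zero_if_nilpotent:
  assumes "nilpotent_step sc br s"
  shows "G x (2 * s) = {0}"
proof -
  have "G x (2 * s) \<subseteq> L (s + 1)"
    using gfil_subset_lcs[of x "2 * s"] by simp
  then show ?thesis
    using assms subspace_0[OF subspace_gfil] by (auto simp: nilpotent_step_def)
qed

subsection \<open>Weighted iterated brackets\<close>

definition congruent_count :: "'a \<Rightarrow> 'a list \<Rightarrow> nat" where
  "congruent_count x xs = length (filter (\<lambda>y. y - x \<in> L 2) xs)"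

definition weighted_brackets :: "'a \<Rightarrow> nat \<Rightarrow> 'a set" where
  "weighted_brackets x k =
     {iter_br br xs | xs. xs \<noteq> [] \<and> k \<le> length xs + congruent_count x xs}"

lemma weighted_brackets_eq:
  "{iter_br br xs | xs. xs \<noteq> [] \<and>
      (length xs \<ge> k \<or>
       (length xs < k \<and> card {i. i < length xs \<and> xs ! i - x \<in> L 2} \<ge> k - length xs))}
   = weighted_brackets x k"
proof -
  have "(length xs \<ge> k \<or> (length xs < k \<and> c \<ge> k - length xs)) \<longleftrightarrow> k \<le> length xs + c"
    for xs :: "'a list" and c :: nat
    by linarith
  then show ?thesis
    unfolding weighted_brackets_def congruent_count_def length_filter_conv_card by simp
qed

lemma weighted_brackets_congruent:
  assumes "y - x \<in> L 2"
  shows "weighted_brackets y k = weighted_brackets x k"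
proof -
  have "z - y \<in> L 2 \<longleftrightarrow> z - x \<in> L 2" for z
    using subspace_add[OF subspace_lcs _ assms, of "z - y"]
      subspace_diff[OF subspace_lcs _ assms, of "z - x"] by auto
  then show ?thesis
    by (simp add: weighted_brackets_def congruent_count_def)
qed

lemma br_Cons_mem_weighted_brackets:
  assumes "b \<in> weighted_brackets x k" "k' \<le> k + (if a - x \<in> L 2 then 2 else 1)"
  shows "br a b \<in> weighted_brackets x k'"
proof -
  obtain xs where xs: "b = iter_br br xs" "xs \<noteq> []" "k \<le> length xs + congruent_count x xs"
    using assms(1) unfolding weighted_brackets_def by blast
  then have "br a b = iter_br br (a # xs)"
    by (cases xs) auto
  moreover have "k' \<le> length (a # xs) + congruent_count x (a # xs)"
    using xs(3) assms(2) by (auto simp: congruent_count_def split: if_splits)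
  ultimately show ?thesis
    unfolding weighted_brackets_def by blast
qed

lemma gfil_subset_span_weighted_brackets: "G x k \<subseteq> span (weighted_brackets x k)"
proof (induction k rule: induct_nat_012)
  have "y \<in> weighted_brackets x k" if "k \<le> 1" for y k
    unfolding weighted_brackets_def using that by (force intro: exI[of _ "[y]"])
  then show "G x 0 \<subseteq> span (weighted_brackets x 0)"
    and "G x (Suc 0) \<subseteq> span (weighted_brackets x (Suc 0))"
    by (auto intro: span_base)
next
  case (ge2 n)
  have "brs UNIV (G x (Suc n)) \<subseteq> span (weighted_brackets x (Suc (Suc n)))"
  proof (rule brs_subset[OF subspace_span])
    fix a b assume "b \<in> G x (Suc n)"
    with ge2.IH(2) have "b \<in> span (weighted_brackets x (Suc n))" ..
    then show "br a b \<in> span (weighted_brackets x (Suc (Suc n)))"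
      by (rule br_span_right[OF _ subspace_span])
        (rule span_base, erule br_Cons_mem_weighted_brackets, simp)
  qed
  moreover have "brs {x} (G x n) \<subseteq> span (weighted_brackets x (Suc (Suc n)))"
  proof (rule brs_subset[OF subspace_span])
    fix a b assume "a \<in> {x}" "b \<in> G x n"
    with ge2.IH(1) have "b \<in> span (weighted_brackets x n)" by auto
    then have "br x b \<in> span (weighted_brackets x (Suc (Suc n)))"
      by (rule br_span_right[OF _ subspace_span])
        (rule span_base, erule br_Cons_mem_weighted_brackets, simp add: subspace_0[OF subspace_lcs])
    with \<open>a \<in> {x}\<close> show "br a b \<in> span (weighted_brackets x (Suc (Suc n)))"
      by simp
  qed
  ultimately show ?case
    by (simp add: set_sum_subset_subspace)
qed

lemma br_congruent_mem_gfil: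
  assumes "y - x \<in> L 2" "t \<in> G x m"
  shows "br y t \<in> G x (m + 2)"
proof -
  have "y - x \<in> G x 2"
    using assms(1) by (simp add: gfil_2)
  then have "br (y - x) t \<in> G x (m + 2)"
    using br_gfil[OF _ assms(2)] by (metis add.commute)
  moreover have "br x t \<in> G x (m + 2)"
    using br_mem_gfil_Suc_Suc[OF assms(2)] by simp
  moreover have "br y t = br x t + br (y - x) t"
    by (simp add: br_diff_left)
  ultimately show ?thesis
    by (metis subspace_add[OF subspace_gfil])
qed

lemma br_pair_mem_gfil:
  "br p q \<in> G x (2 + congruent_count x [p, q])"
proof -
  have G1: "z \<in> G x 1" for z
    by simp
  have G2: "z - x \<in> G x 2" if "z - x \<in> L 2" for z
    using that by (simp add: gfil_2)
  show ?thesis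
  proof (cases "p - x \<in> L 2"; cases "q - x \<in> L 2")
    assume p: "p - x \<in> L 2" and q: "q - x \<in> L 2"
    have "br p (q - x) \<in> G x 4"
      using br_congruent_mem_gfil[OF p G2[OF q]] by simp
    moreover have "br x (p - x) \<in> G x 4"
      using br_mem_gfil_Suc_Suc[OF G2[OF p]] by (simp add: numeral_eq_Suc)
    moreover have "br p q = br p (q - x) - br x (p - x)"
      by (simp add: br_diff_left br_antisym[of p x] br_diff_right)
    ultimately have "br p q \<in> G x 4"
      by (metis subspace_diff[OF subspace_gfil])
    then show ?thesis
      using p q by (simp add: congruent_count_def)
  next
    assume p: "p - x \<in> L 2" and q: "q - x \<notin> L 2"
    show ?thesis
      using br_congruent_mem_gfil[OF p G1] p q
      by (simp add: congruent_count_def numeral_3_eq_3 del: gfil.simps)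
  next
    assume p: "p - x \<notin> L 2" and q: "q - x \<in> L 2"
    have "- br q p \<in> G x 3"
      using br_congruent_mem_gfil[OF q G1]
      by (simp add: subspace_neg[OF subspace_gfil] numeral_3_eq_3 del: gfil.simps)
    then show ?thesis
      using p q by (simp add: congruent_count_def br_antisym[of p q])
  next
    assume p: "p - x \<notin> L 2" and q: "q - x \<notin> L 2"
    show ?thesis
      using br_mem_gfil_Suc[OF G1[of q], of p] p q
      by (simp add: congruent_count_def numeral_2_eq_2 del: gfil.simps)
  qed
qed

lemma iter_br_mem_gfil:
  "2 \<le> length xs \<Longrightarrow> iter_br br xs \<in> G x (length xs + congruent_count x xs)"
proof (induction xs rule: induct_list012)
  case (3 a y zs)
  show ?case
  proof (cases zs)
    case Nil
    then show ?thesis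
      using br_pair_mem_gfil[of a y x] by (simp add: add.commute)
  next
    case (Cons z zs')
    then have IH: "iter_br br (y # zs) \<in> G x (length (y # zs) + congruent_count x (y # zs))"
      using "3.IH"(2) by simp
    show ?thesis
    proof (cases "a - x \<in> L 2")
      case True
      then show ?thesis
        using br_congruent_mem_gfil[OF True IH] by (simp add: congruent_count_def)
    next
      case False
      then show ?thesis
        using br_mem_gfil_Suc[OF IH] by (simp add: congruent_count_def)
    qed
  qed
qed auto

lemma span_weighted_brackets_subset_gfil:
  assumes "3 \<le> k"
  shows "span (weighted_brackets x k) \<subseteq> G x k"
proof (rule span_minimal[OF _ subspace_gfil], rule subsetI)
  fix t assume "t \<in> weighted_brackets x k"
  then obtain xs where xs: "t = iter_br br xs" "xs \<noteq> []" "k \<le> length xs + congruent_count x xs"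
    unfolding weighted_brackets_def by blast
  have "congruent_count x xs \<le> length xs"
    by (simp add: congruent_count_def)
  then have "2 \<le> length xs"
    using xs(2,3) assms by (cases xs) auto
  then show "t \<in> G x k"
    using iter_br_mem_gfil gfil_antimono[OF xs(3)] xs(1) by blast
qed

lemma gfil_eq_span_weighted_brackets: "3 \<le> k \<Longrightarrow> G x k = span (weighted_brackets x k)"
  using gfil_subset_span_weighted_brackets span_weighted_brackets_subset_gfil by blast

lemma gfil_congruent:
  assumes "y - x \<in> L 2"
  shows "G y i = G x i"
proof (cases "3 \<le> i")
  case True
  then show ?thesis
    by (simp add: gfil_eq_span_weighted_brackets weighted_brackets_congruent[OF assms])
next
  case False
  then consider "i = 0" | "i = 1" | "i = 2"
    by linarith
  then show ?thesis
    by cases (simp_all add: gfil_2)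
qed

end

theorem lemma2p1:
  fixes sc :: "'k::field \<Rightarrow> 'a::ab_group_add \<Rightarrow> 'a"
    and br :: "'a \<Rightarrow> 'a \<Rightarrow> 'a"
    and x :: 'a and s :: nat
  assumes "lie_algebra sc br"
    and "nilpotent_step sc br s"
  shows "(gfil sc br x 2 = lcs sc br 2) \<and>
    (\<forall>k\<ge>3. gfil sc br x k = module.span sc
           {iter_br br xs | xs. xs \<noteq> [] \<and>
              (length xs \<ge> k \<or>
               (length xs < k \<and>
                card {i. i < length xs \<and> xs ! i - x \<in> lcs sc br 2} \<ge> k - length xs))}) \<and>
    (\<forall>y. y - x \<in> lcs sc br 2 \<longrightarrow> (\<forall>i. gfil sc br y i = gfil sc br x i)) \<and>
    (\<forall>i\<ge>1. \<forall>j\<ge>1. lie_br_set sc br (gfil sc br x i) (gfil sc br x j) \<subseteq> gfil sc br x (i + j)) \<and>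
    (\<forall>i\<ge>1. lcs sc br i \<subseteq> gfil sc br x i \<and> gfil sc br x i \<subseteq> lcs sc br (i div 2 + 1)) \<and>
    (gfil sc br x (2 * s) = {0})"
proof -
  interpret lie_alg sc br
    by (rule lie_alg.intro[OF assms(1)])
  have "lie_br_set sc br (gfil sc br x i) (gfil sc br x j) \<subseteq> gfil sc br x (i + j)" for i j
    by (rule brs_subset[OF subspace_gfil]) (rule br_gfil)
  then show ?thesis
    using gfil_2 gfil_eq_span_weighted_brackets gfil_congruent lcs_subset_gfil gfil_subset_lcs
      gfil_eq_zero_if_nilpotent[OF assms(2)]
    by (simp add: weighted_brackets_eq)
qed

end
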